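(* Let $\Sigma$ be a closed oriented surface, $\mathbb T=\mathfrak t/\Lambda$ a compact torus and $K$ a nondegenerate symmetric bilinear form as below. For Lagrangians $L_1,L_2,L_3\subset H^1(\Sigma;\mathbb R)$ let $\mu_\Sigma(L_1,L_2,L_3)$ be their Maslov–Kashiwara index for the cup-product form $\omega_\Sigma$, and define $\mu_K(L_1,L_2,L_3):=\mu(\mathcal P_{L_1},\mathcal P_{L_2},\mathcal P_{L_3})$, the Maslov–Kashiwara index in $(H^1(\Sigma;\mathfrak t),\omega_{\Sigma,K})$ of $\mathcal P_{L_i}=L_i\otimes\mathfrak t$. Then $\mu_K(L_1,L_2,L_3)=\sigma(K)\,\mu_\Sigma(L_1,L_2,L_3)$, where $\sigma(K)$ is the signature of the real bilinear form $K$ on $\mathfrak t$.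
   Context: $K:\Lambda\times\Lambda\to\mathbb Z$ is even, integral, nondegenerate and symmetric, extended to $\mathfrak t$. $\omega_{\Sigma,K}([\alpha],[\beta])=\int_\Sigma K(\alpha\wedge\beta)$. For Lagrangians $V_1,V_2,V_3$ of a symplectic vector space $(V,\omega)$, the Maslov–Kashiwara index $\mu(V_1,V_2,V_3)$ is the signature of the quadratic form $Q(x_1,x_2,x_3)=\omega(x_1,x_2)+\omega(x_2,x_3)+\omega(x_3,x_1)$ on $V_1\oplus V_2\oplus V_3$. *)

theory Defs
  imports "HOL-Analysis.Analysis"
begin

definition pos_index :: "('a::real_vector \<Rightarrow> real) \<Rightarrow> 'a set \<Rightarrow> nat" where
  "pos_index q S = Max {dim U | U. subspace U \<and> U \<subseteq> S \<and> (\<forall>x\<in>U. x \<noteq> 0 \<longrightarrow> q x > 0)}"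

definition neg_index :: "('a::real_vector \<Rightarrow> real) \<Rightarrow> 'a set \<Rightarrow> nat" where
  "neg_index q S = Max {dim U | U. subspace U \<and> U \<subseteq> S \<and> (\<forall>x\<in>U. x \<noteq> 0 \<longrightarrow> q x < 0)}"

definition signature :: "('a::real_vector \<Rightarrow> real) \<Rightarrow> 'a set \<Rightarrow> int" where
  "signature q S = int (pos_index q S) - int (neg_index q S)"

definition symplectic_on :: "'a::real_vector set \<Rightarrow> ('a \<Rightarrow> 'a \<Rightarrow> real) \<Rightarrow> bool" where
  "symplectic_on V \<omega> \<longleftrightarrow> subspace V \<and> bilinear \<omega> \<and> (\<forall>x\<in>V. \<omega> x x = 0) \<and>
     (\<forall>x\<in>V. (\<forall>y\<in>V. \<omega> x y = 0) \<longrightarrow> x = 0)"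

definition lagrangian :: "'a::real_vector set \<Rightarrow> ('a \<Rightarrow> 'a \<Rightarrow> real) \<Rightarrow> 'a set \<Rightarrow> bool" where
  "lagrangian V \<omega> L \<longleftrightarrow> subspace L \<and> L \<subseteq> V \<and> L = {x\<in>V. \<forall>y\<in>L. \<omega> x y = 0}"

definition maslov_kashiwara :: "('a::real_vector \<Rightarrow> 'a \<Rightarrow> real) \<Rightarrow> 'a set \<Rightarrow> 'a set \<Rightarrow> 'a set \<Rightarrow> int" where
  "maslov_kashiwara \<omega> V1 V2 V3 =
     signature (\<lambda>(x1, x2, x3). \<omega> x1 x2 + \<omega> x2 x3 + \<omega> x3 x1) (V1 \<times> V2 \<times> V3)"

text \<open>Tensor products with t = real^'n, realised as real^('m \<times> 'n).\<close>

definition tprod :: "real^'m \<Rightarrow> real^'n \<Rightarrow> real^('m \<times> 'n)" where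
  "tprod a t = (\<chi> p. a $ fst p * t $ snd p)"

definition tensor_t :: "(real^'m) set \<Rightarrow> (real^('m \<times> 'n::finite)) set" where
  "tensor_t L = span {tprod a (t :: real^'n) | a t. a \<in> L}"

text \<open>omega_{Sigma,K}: the bilinear form with omega_K(a (x) s, b (x) t) = omega(a,b) K(s,t).\<close>

definition omega_K :: "(real^'m \<Rightarrow> real^'m \<Rightarrow> real) \<Rightarrow> (real^'n \<Rightarrow> real^'n \<Rightarrow> real)
    \<Rightarrow> real^('m \<times> 'n) \<Rightarrow> real^('m \<times> 'n) \<Rightarrow> real" where
  "omega_K \<omega> K x y = (\<Sum>p\<in>UNIV. \<Sum>q\<in>UNIV.
     \<omega> (axis (fst p) 1) (axis (fst q) 1) * K (axis (snd p) 1) (axis (snd q) 1) * x $ p * y $ q)"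

text \<open>The lattice Lambda, in coordinates where Lambda = Z^n inside t = R^n.\<close>

definition lattice_pt :: "real^'n \<Rightarrow> bool" where
  "lattice_pt x \<longleftrightarrow> (\<forall>i. x $ i \<in> \<int>)"

definition even_integral_form :: "(real^'n \<Rightarrow> real^'n \<Rightarrow> real) \<Rightarrow> bool" where
  "even_integral_form K \<longleftrightarrow> bilinear K \<and> (\<forall>x y. K x y = K y x) \<and>
     (\<forall>x. (\<forall>y. K x y = 0) \<longrightarrow> x = 0) \<and>
     (\<forall>x y. lattice_pt x \<longrightarrow> lattice_pt y \<longrightarrow> K x y \<in> \<int>) \<and>
     (\<forall>x. lattice_pt x \<longrightarrow> (\<exists>k::int. K x x = 2 * of_int k))"

end

theory Submission
  imports Defs
begin

(* Choose a basis B of L1 x L2 x L3 that is orthogonal for the polarisation of the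
   Maslov-Kashiwara form of omega, and a K-orthogonal basis E of t. Since
   omega_K (a (x) s) (b (x) t) = omega a b * K s t, the vectors u (x) e with u in B and e in E
   form an orthogonal basis of P_L1 x P_L2 x P_L3 for the polarisation of the
   Maslov-Kashiwara form of omega_K, with diagonal entries Q(u) * K(e, e). By Sylvester's law
   of inertia every signature involved is the number of positive minus the number of negative
   diagonal entries, and this count is multiplicative for products of diagonal entries. *)

section \<open>Sylvester's law of inertia\<close>

(* An indexed family, so that the basis of a tensor product can be indexed by pairs; the
   coefficient condition is linear independence of the family. *)
definition orthogonal_basis_of ::
    "('a::euclidean_space \<Rightarrow> 'a \<Rightarrow> real) \<Rightarrow> 'a set \<Rightarrow> 'i set \<Rightarrow> ('i \<Rightarrow> 'a) \<Rightarrow> bool" where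
  "orthogonal_basis_of b S I f \<longleftrightarrow> finite I \<and> f ` I \<subseteq> S \<and> S \<subseteq> span (f ` I) \<and>
     (\<forall>c. (\<Sum>i\<in>I. c i *\<^sub>R f i) = 0 \<longrightarrow> (\<forall>i\<in>I. c i = 0)) \<and>
     (\<forall>i\<in>I. \<forall>j\<in>I. i \<noteq> j \<longrightarrow> b (f i) (f j) = 0)"

lemma inj_on_if_coefficients_vanish:
  fixes f :: "'i \<Rightarrow> 'a::real_vector"
  assumes "finite I" and "\<forall>c. (\<Sum>i\<in>I. c i *\<^sub>R f i) = 0 \<longrightarrow> (\<forall>i\<in>I. c i = (0::real))"
  shows "inj_on f I"
proof (rule inj_onI, rule ccontr)
  fix i j assume ij: "i \<in> I" "j \<in> I" "f i = f j" "i \<noteq> j"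
  define c where "c = (\<lambda>k. if k = i then 1 else if k = j then -1 else (0::real))"
  have "(\<Sum>k\<in>I. c k *\<^sub>R f k) = (\<Sum>k\<in>{i,j}. c k *\<^sub>R f k)"
    by (rule sum.mono_neutral_right) (use assms(1) ij in \<open>auto simp: c_def\<close>)
  also have "\<dots> = 0" using ij by (simp add: c_def)
  finally have "c i = 0" using assms(2) ij by blast
  then show False by (simp add: c_def)
qed

lemma independent_image_if_coefficients_vanish:
  fixes f :: "'i \<Rightarrow> 'a::real_vector"
  assumes "finite I" and "\<forall>c. (\<Sum>i\<in>I. c i *\<^sub>R f i) = 0 \<longrightarrow> (\<forall>i\<in>I. c i = (0::real))"
  shows "independent (f ` I)"
  unfolding dependent_finite[OF finite_imageI[OF assms(1)]]
proof clarsimp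
  fix u i assume i: "i \<in> I" "u (f i) \<noteq> 0" and "(\<Sum>v\<in>f ` I. u v *\<^sub>R v) = 0"
  then have "(\<Sum>k\<in>I. u (f k) *\<^sub>R f k) = 0"
    by (simp add: sum.reindex[OF inj_on_if_coefficients_vanish[OF assms]])
  then show False using assms(2)[rule_format, of "\<lambda>k. u (f k)"] i by blast
qed

lemma span_image_eq_sum:
  assumes "finite A" "inj_on f A" "x \<in> span (f ` A)"
  obtains c where "x = (\<Sum>i\<in>A. c i *\<^sub>R f i)"
proof -
  obtain u where "x = (\<Sum>v\<in>f ` A. u v *\<^sub>R v)"
    using assms span_finite[of "f ` A"] by auto
  then have "x = (\<Sum>i\<in>A. u (f i) *\<^sub>R f i)" by (simp add: sum.reindex[OF assms(2)])
  then show thesis by (rule that)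
qed

lemma bilinear_diag_sum_orthogonal:
  assumes "bilinear b" and "finite A" and "\<forall>i\<in>A. \<forall>j\<in>A. i \<noteq> j \<longrightarrow> b (f i) (f j) = 0"
  shows "b (\<Sum>i\<in>A. c i *\<^sub>R f i) (\<Sum>i\<in>A. c i *\<^sub>R f i) = (\<Sum>i\<in>A. (c i)\<^sup>2 * b (f i) (f i))"
proof -
  have "b (\<Sum>i\<in>A. c i *\<^sub>R f i) (\<Sum>i\<in>A. c i *\<^sub>R f i) = (\<Sum>i\<in>A. \<Sum>j\<in>A. c i * c j * b (f i) (f j))"
    by (simp add: bilinear_sum[OF assms(1)] sum.cartesian_product bilinear_lmul[OF assms(1)]
        bilinear_rmul[OF assms(1)] mult_ac)
  also have "\<dots> = (\<Sum>i\<in>A. \<Sum>j\<in>A. if j = i then c i * c j * b (f i) (f j) else 0)"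
    using assms(3) by (intro sum.cong) auto
  also have "\<dots> = (\<Sum>i\<in>A. (c i)\<^sup>2 * b (f i) (f i))"
    using assms(2) by (simp add: power2_eq_square)
  finally show ?thesis .
qed

lemma dim_add_le_if_Int_zero:
  fixes S :: "'a::euclidean_space set"
  assumes "subspace S" "subspace U" "subspace W" "U \<subseteq> S" "W \<subseteq> S" "U \<inter> W \<subseteq> {0}"
  shows "dim U + dim W \<le> dim S"
proof -
  have "{x + y |x y. x \<in> U \<and> y \<in> W} \<subseteq> S"
    using assms by (auto intro: subspace_add)
  then have "dim {x + y |x y. x \<in> U \<and> y \<in> W} \<le> dim S"
    by (rule dim_subset)
  moreover have "dim (U \<inter> W) = 0"
    using assms(6) dim_eq_0 by blast
  ultimately show ?thesis
    using dim_sums_Int[OF assms(2,3)] by linarith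
qed

lemma bilinear_in_span_image:
  assumes "bilinear g" "x \<in> span B" "y \<in> span C"
  shows "g x y \<in> span ((\<lambda>(u, v). g u v) ` (B \<times> C))"
proof -
  let ?W = "span ((\<lambda>(u, v). g u v) ` (B \<times> C))"
  have lin_l: "linear (\<lambda>u. g u v)" and lin_r: "linear (g u)" for u v
    using assms(1) unfolding bilinear_def by auto
  have generators: "g u y \<in> ?W" if "u \<in> B" for u
  proof (rule span_induct[OF assms(3)])
    show "subspace {v. g u v \<in> ?W}"
      using linear_subspace_vimage[OF lin_r subspace_span] by (simp add: vimage_def)
    show "g u v \<in> ?W" if "v \<in> C" for v
      using \<open>u \<in> B\<close> that by (auto intro: span_base)
  qed
  show ?thesis
  proof (rule span_induct[OF assms(2)])
    show "subspace {u. g u y \<in> ?W}"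
      using linear_subspace_vimage[OF lin_l subspace_span] by (simp add: vimage_def)
  qed (rule generators)
qed

lemma finite_dims_of_subspaces:
  fixes S :: "'a::euclidean_space set"
  shows "finite {dim U | U. subspace U \<and> U \<subseteq> S \<and> P U}"
  by (rule finite_subset[of _ "{..dim S}"]) (auto intro: dim_subset)

context
  fixes b :: "'a::euclidean_space \<Rightarrow> 'a \<Rightarrow> real" and S :: "'a set" and I :: "'i set" and f
  assumes basis: "orthogonal_basis_of b S I f"
begin

lemma orthogonal_basis_of_inj: "inj_on f I"
  using basis inj_on_if_coefficients_vanish by (auto simp: orthogonal_basis_of_def)

lemma orthogonal_basis_of_independent: "A \<subseteq> I \<Longrightarrow> independent (f ` A)"
proof -
  assume "A \<subseteq> I"
  moreover have "independent (f ` I)"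
    using basis independent_image_if_coefficients_vanish[of I f] by (simp add: orthogonal_basis_of_def)
  ultimately show ?thesis using independent_mono image_mono by metis
qed

lemma orthogonal_basis_of_dim_span: "A \<subseteq> I \<Longrightarrow> dim (span (f ` A)) = card A"
  using dim_span_eq_card_independent[OF orthogonal_basis_of_independent]
    card_image[OF inj_on_subset[OF orthogonal_basis_of_inj]] by simp

lemma orthogonal_basis_of_span: "subspace S \<Longrightarrow> span (f ` I) = S"
  using basis by (simp add: orthogonal_basis_of_def span_subspace)

lemma orthogonal_basis_of_finite: "A \<subseteq> I \<Longrightarrow> finite A"
  using basis finite_subset by (auto simp: orthogonal_basis_of_def)

lemma orthogonal_basis_of_orthogonal: "i \<in> I \<Longrightarrow> j \<in> I \<Longrightarrow> i \<noteq> j \<Longrightarrow> b (f i) (f j) = 0"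
  using basis by (simp add: orthogonal_basis_of_def)

lemma orthogonal_basis_of_coefficients:
  assumes "A \<subseteq> I" "x \<in> span (f ` A)"
  obtains c where "x = (\<Sum>i\<in>A. c i *\<^sub>R f i)"
  using span_image_eq_sum[OF orthogonal_basis_of_finite[OF assms(1)]
      inj_on_subset[OF orthogonal_basis_of_inj assms(1)] assms(2)] by blast

lemma orthogonal_basis_of_diag_sum:
  assumes "bilinear b" "A \<subseteq> I"
  shows "b (\<Sum>i\<in>A. c i *\<^sub>R f i) (\<Sum>i\<in>A. c i *\<^sub>R f i) = (\<Sum>i\<in>A. (c i)\<^sup>2 * b (f i) (f i))"
proof (rule bilinear_diag_sum_orthogonal[OF assms(1) orthogonal_basis_of_finite[OF assms(2)]])
  show "\<forall>i\<in>A. \<forall>j\<in>A. i \<noteq> j \<longrightarrow> b (f i) (f j) = 0"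
    using orthogonal_basis_of_orthogonal assms(2) by blast
qed

lemma orthogonal_basis_of_pos_on_span:
  assumes "bilinear b" "A \<subseteq> I" "\<forall>i\<in>A. b (f i) (f i) > 0" "x \<in> span (f ` A)" "x \<noteq> 0"
  shows "b x x > 0"
proof -
  obtain c where x: "x = (\<Sum>i\<in>A. c i *\<^sub>R f i)"
    using orthogonal_basis_of_coefficients[OF assms(2,4)] .
  have "\<exists>i\<in>A. c i \<noteq> 0"
  proof (rule ccontr)
    assume "\<not> (\<exists>i\<in>A. c i \<noteq> 0)"
    then have "x = 0" unfolding x by simp
    then show False using assms(5) by simp
  qed
  then obtain i where i: "i \<in> A" "c i \<noteq> 0" by blast
  have "(\<Sum>i\<in>A. (c i)\<^sup>2 * b (f i) (f i)) > 0"
    using i assms(3) by (intro sum_pos2[OF orthogonal_basis_of_finite[OF assms(2)] i(1)]) auto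
  then show ?thesis unfolding x orthogonal_basis_of_diag_sum[OF assms(1,2)] .
qed

lemma orthogonal_basis_of_nonpos_on_span:
  assumes "bilinear b" "A \<subseteq> I" "\<forall>i\<in>A. b (f i) (f i) \<le> 0" "x \<in> span (f ` A)"
  shows "b x x \<le> 0"
proof -
  obtain c where x: "x = (\<Sum>i\<in>A. c i *\<^sub>R f i)"
    using orthogonal_basis_of_coefficients[OF assms(2,4)] .
  have "(\<Sum>i\<in>A. (c i)\<^sup>2 * b (f i) (f i)) \<le> 0"
    using assms(3) by (intro sum_nonpos mult_nonneg_nonpos) auto
  then show ?thesis unfolding x orthogonal_basis_of_diag_sum[OF assms(1,2)] .
qed

lemma orthogonal_basis_of_span_subset: "subspace S \<Longrightarrow> A \<subseteq> I \<Longrightarrow> span (f ` A) \<subseteq> S"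
  using orthogonal_basis_of_span by (metis image_mono span_mono)

lemma orthogonal_basis_of_dim: "subspace S \<Longrightarrow> dim S = card I"
  using orthogonal_basis_of_dim_span[OF order_refl] orthogonal_basis_of_span by simp

lemma dim_pos_definite_le:
  assumes b: "bilinear b" and S: "subspace S"
    and U: "subspace U" "U \<subseteq> S" "\<forall>x\<in>U. x \<noteq> 0 \<longrightarrow> b x x > 0"
  shows "dim U \<le> card {i\<in>I. b (f i) (f i) > 0}"
proof -
  define P where "P = {i\<in>I. b (f i) (f i) > 0}"
  define N where "N = {i\<in>I. b (f i) (f i) \<le> 0}"
  have PN: "P \<subseteq> I" "N \<subseteq> I" "I = P \<union> N" "P \<inter> N = {}"
    by (auto simp: P_def N_def)
  have "U \<inter> span (f ` N) \<subseteq> {0}"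
  proof
    fix x assume x: "x \<in> U \<inter> span (f ` N)"
    have "b x x \<le> 0"
      using orthogonal_basis_of_nonpos_on_span[OF b PN(2)] x unfolding N_def by blast
    then show "x \<in> {0}" using U(3) x by (auto simp: not_le[symmetric])
  qed
  then have "dim U + dim (span (f ` N)) \<le> dim S"
    by (rule dim_add_le_if_Int_zero[OF S U(1) subspace_span U(2) orthogonal_basis_of_span_subset[OF S PN(2)]])
  then have "dim U + card N \<le> card I"
    unfolding orthogonal_basis_of_dim_span[OF PN(2)] orthogonal_basis_of_dim[OF S] .
  moreover have "card I = card P + card N"
    using card_Un_disjoint[OF orthogonal_basis_of_finite[OF PN(1)] orthogonal_basis_of_finite[OF PN(2)] PN(4)]
    by (simp add: PN(3)[symmetric])
  ultimately show ?thesis unfolding P_def by simp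
qed

lemma pos_index_orthogonal_basis:
  assumes b: "bilinear b" and S: "subspace S"
  shows "pos_index (\<lambda>x. b x x) S = card {i\<in>I. b (f i) (f i) > 0}"
proof -
  define P where "P = {i\<in>I. b (f i) (f i) > 0}"
  have P: "P \<subseteq> I" by (auto simp: P_def)
  let ?M = "{dim U | U. subspace U \<and> U \<subseteq> S \<and> (\<forall>x\<in>U. x \<noteq> 0 \<longrightarrow> b x x > 0)}"
  have "\<forall>x\<in>span (f ` P). x \<noteq> 0 \<longrightarrow> b x x > 0"
    using orthogonal_basis_of_pos_on_span[OF b P] unfolding P_def by blast
  then have "dim (span (f ` P)) \<in> ?M"
    using orthogonal_basis_of_span_subset[OF S P] subspace_span by blast
  then have "card P \<in> ?M"
    using orthogonal_basis_of_dim_span[OF P] by simp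
  moreover have "d \<le> card P" if "d \<in> ?M" for d
    using that dim_pos_definite_le[OF b S] unfolding P_def by blast
  ultimately have "Max ?M = card P"
    by (intro Max_eqI[OF finite_dims_of_subspaces])
  then show ?thesis unfolding pos_index_def P_def .
qed

end

definition diag_signature :: "('i \<Rightarrow> real) \<Rightarrow> 'i set \<Rightarrow> int" where
  "diag_signature \<alpha> I = int (card {i\<in>I. \<alpha> i > 0}) - int (card {i\<in>I. \<alpha> i < 0})"

lemma diag_signature_times:
  assumes "finite A" "finite B"
  shows "diag_signature (\<lambda>p. \<alpha> (fst p) * \<beta> (snd p)) (A \<times> B) = diag_signature \<alpha> A * diag_signature \<beta> B"
proof -
  let ?Ap = "{a\<in>A. \<alpha> a > 0}" and ?An = "{a\<in>A. \<alpha> a < 0}"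
    and ?Bp = "{b\<in>B. \<beta> b > 0}" and ?Bn = "{b\<in>B. \<beta> b < 0}"
  have "{p\<in>A \<times> B. \<alpha> (fst p) * \<beta> (snd p) > 0} = ?Ap \<times> ?Bp \<union> ?An \<times> ?Bn"
    by (auto simp: zero_less_mult_iff)
  moreover have "{p\<in>A \<times> B. \<alpha> (fst p) * \<beta> (snd p) < 0} = ?Ap \<times> ?Bn \<union> ?An \<times> ?Bp"
    by (auto simp: mult_less_0_iff)
  moreover have "card (?Ap \<times> ?Bp \<union> ?An \<times> ?Bn) = card ?Ap * card ?Bp + card ?An * card ?Bn"
    and "card (?Ap \<times> ?Bn \<union> ?An \<times> ?Bp) = card ?Ap * card ?Bn + card ?An * card ?Bp"
    using assms by (subst card_Un_disjoint; auto simp: card_cartesian_product)+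
  ultimately show ?thesis by (simp add: diag_signature_def algebra_simps)
qed

lemma orthogonal_basis_of_uminus:
  "orthogonal_basis_of b S I f \<Longrightarrow> orthogonal_basis_of (\<lambda>x y. - b x y) S I f"
  by (simp add: orthogonal_basis_of_def)

lemma bilinear_uminus: "bilinear b \<Longrightarrow> bilinear (\<lambda>x y. - b x y)"
  unfolding bilinear_def by (auto intro: linear_compose_neg)

lemma neg_index_eq_pos_index_uminus: "neg_index q S = pos_index (\<lambda>x. - q x) S"
  by (simp add: neg_index_def pos_index_def)

theorem signature_orthogonal_basis:
  assumes "orthogonal_basis_of b S I f" "bilinear b" "subspace S"
  shows "signature (\<lambda>x. b x x) S = diag_signature (\<lambda>i. b (f i) (f i)) I"
  using pos_index_orthogonal_basis[OF assms]
    pos_index_orthogonal_basis[OF orthogonal_basis_of_uminus bilinear_uminus, OF assms]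
  by (simp add: signature_def diag_signature_def neg_index_eq_pos_index_uminus)

lemma orthogonal_basis_of_id:
  assumes "B \<subseteq> S" "independent B" "S \<subseteq> span B" "\<forall>x\<in>B. \<forall>y\<in>B. x \<noteq> y \<longrightarrow> b x y = 0"
  shows "orthogonal_basis_of b S B id"
proof -
  have "finite B" using assms(2) finiteI_independent by blast
  then show ?thesis
    using assms unfolding orthogonal_basis_of_def dependent_finite[OF \<open>finite B\<close>] by auto
qed

lemma symmetric_bilinear_eq_0_if_isotropic:
  fixes b :: "'a::real_vector \<Rightarrow> 'a \<Rightarrow> real"
  assumes b: "bilinear b" and sym: "\<forall>x y. b x y = b y x"
    and "subspace S" and iso: "\<forall>x\<in>S. b x x = 0" and "x \<in> S" "y \<in> S"
  shows "b x y = 0"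
proof -
  have "b (x + y) (x + y) = b x x + 2 * b x y + b y y"
    using sym by (simp add: bilinear_ladd[OF b] bilinear_radd[OF b])
  moreover have "x + y \<in> S" using assms by (simp add: subspace_add)
  ultimately show ?thesis using iso assms(5,6) by simp
qed

lemma orthogonal_basis_of_insert:
  fixes S :: "'a::euclidean_space set"
  assumes b: "bilinear b" and sym: "\<forall>x y. b x y = b y x" and S: "subspace S"
    and v: "v \<in> S" "b v v \<noteq> 0"
    and B: "orthogonal_basis_of b (S \<inter> {x. b v x = 0}) B id"
  shows "orthogonal_basis_of b S (insert v B) id"
proof (rule orthogonal_basis_of_id)
  let ?S' = "S \<inter> {x. b v x = 0}"
  have lin: "linear (b v)" using b unfolding bilinear_def by blast
  have S': "subspace ?S'"
    using subspace_inter[OF S linear_subspace_kernel[OF lin]] .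
  have B_S': "B \<subseteq> ?S'" and span_B: "span B = ?S'" and indep_B: "independent B"
    using B orthogonal_basis_of_span[OF B S'] orthogonal_basis_of_independent[OF B, of B]
    by (auto simp: orthogonal_basis_of_def)
  show "insert v B \<subseteq> S" using v B_S' by blast
  show "independent (insert v B)"
    using indep_B v(2) by (simp add: independent_insertI span_B)
  show "S \<subseteq> span (insert v B)"
  proof
    fix x assume x: "x \<in> S"
    define c where "c = b v x / b v v"
    have "x - c *\<^sub>R v \<in> ?S'"
      using x v S by (simp add: c_def subspace_diff subspace_scale bilinear_rsub[OF b] bilinear_rmul[OF b])
    then have "x - c *\<^sub>R v \<in> span (insert v B)"
      using span_B span_mono[OF subset_insertI] by blast
    moreover have "c *\<^sub>R v \<in> span (insert v B)"
      by (simp add: span_base span_scale)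
    ultimately have "(x - c *\<^sub>R v) + c *\<^sub>R v \<in> span (insert v B)"
      by (rule span_add)
    then show "x \<in> span (insert v B)" by simp
  qed
  show "\<forall>x\<in>insert v B. \<forall>y\<in>insert v B. x \<noteq> y \<longrightarrow> b x y = 0"
    using orthogonal_basis_of_orthogonal[OF B] B_S' sym by auto
qed

theorem orthogonal_basis_exists:
  fixes S :: "'a::euclidean_space set"
  assumes "subspace S" and b: "bilinear b" and sym: "\<forall>x y. b x y = b y x"
  obtains B where "orthogonal_basis_of b S B id"
  using assms(1)
proof (induction "dim S" arbitrary: S thesis rule: less_induct)
  case less
  show ?case
  proof (cases "\<forall>x\<in>S. b x x = 0")
    case True
    obtain B where "B \<subseteq> S" "independent B" "S \<subseteq> span B"
      by (rule basis_exists)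
    moreover have "\<forall>x\<in>B. \<forall>y\<in>B. b x y = 0"
      using symmetric_bilinear_eq_0_if_isotropic[OF b sym less.prems(2) True] \<open>B \<subseteq> S\<close> by blast
    ultimately show ?thesis by (blast intro: less.prems(1) orthogonal_basis_of_id)
  next
    case False
    then obtain v where v: "v \<in> S" "b v v \<noteq> 0" by blast
    let ?S' = "S \<inter> {x. b v x = 0}"
    have lin: "linear (b v)" using b unfolding bilinear_def by blast
    have S': "subspace ?S'"
      using subspace_inter[OF less.prems(2) linear_subspace_kernel[OF lin]] .
    have "span ?S' \<subset> span S"
      unfolding span_eq_iff[THEN iffD2, OF S'] span_eq_iff[THEN iffD2, OF less.prems(2)]
      using v by auto
    then obtain B where "orthogonal_basis_of b ?S' B id"
      using less.hyps[OF dim_psubset _ S'] by blast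
    then show ?thesis
      using orthogonal_basis_of_insert[OF b sym less.prems(2) v] less.prems(1) by blast
  qed
qed

section \<open>The Maslov--Kashiwara form\<close>

definition maslov_polar :: "('v \<Rightarrow> 'v \<Rightarrow> real) \<Rightarrow> 'v \<times> 'v \<times> 'v \<Rightarrow> 'v \<times> 'v \<times> 'v \<Rightarrow> real" where
  "maslov_polar h x y =
     (h (fst x) (fst (snd y)) + h (fst y) (fst (snd x)) + h (fst (snd x)) (snd (snd y)) +
      h (fst (snd y)) (snd (snd x)) + h (snd (snd x)) (fst y) + h (snd (snd y)) (fst x)) / 2"

lemma maslov_polar_diag: "(\<lambda>x. maslov_polar h x x) = (\<lambda>(x1, x2, x3). h x1 x2 + h x2 x3 + h x3 x1)"
  by (auto simp: maslov_polar_def fun_eq_iff)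

lemma maslov_kashiwara_eq_signature_polar:
  "maslov_kashiwara h V1 V2 V3 = signature (\<lambda>x. maslov_polar h x x) (V1 \<times> V2 \<times> V3)"
  unfolding maslov_kashiwara_def maslov_polar_diag ..

lemma maslov_polar_sym: "maslov_polar h x y = maslov_polar h y x"
  by (simp add: maslov_polar_def algebra_simps)

lemma bilinear_maslov_polar:
  assumes "bilinear h" shows "bilinear (maslov_polar h)"
  unfolding bilinear_def
  by (auto intro!: linearI simp: maslov_polar_def bilinear_ladd[OF assms] bilinear_radd[OF assms]
      bilinear_lmul[OF assms] bilinear_rmul[OF assms] algebra_simps add_divide_distrib)

section \<open>Tensoring with t\<close>

lemma bilinear_tprod: "bilinear tprod"
  unfolding bilinear_def by (auto intro!: linearI simp: tprod_def vec_eq_iff algebra_simps)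

lemma bilinear_axis_expansion:
  fixes h :: "real^'m \<Rightarrow> real^'n \<Rightarrow> real"
  assumes "bilinear h"
  shows "h x y = (\<Sum>i\<in>UNIV. \<Sum>j\<in>UNIV. x$i * y$j * h (axis i 1) (axis j 1))"
proof -
  have expansion: "z = (\<Sum>i\<in>UNIV. z$i *\<^sub>R axis i 1)" for z :: "real^'k"
    using basis_expansion[of z] by (simp add: scalar_mult_eq_scaleR)
  have "h x y = h (\<Sum>i\<in>UNIV. x$i *\<^sub>R axis i 1) (\<Sum>j\<in>UNIV. y$j *\<^sub>R axis j 1)"
    using expansion[of x] expansion[of y] by simp
  also have "\<dots> = (\<Sum>i\<in>UNIV. \<Sum>j\<in>UNIV. x$i * y$j * h (axis i 1) (axis j 1))"
    by (simp add: bilinear_sum[OF assms] sum.cartesian_product bilinear_lmul[OF assms]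
        bilinear_rmul[OF assms] mult_ac)
  finally show ?thesis .
qed

lemma sum_UNIV_prod:
  "(\<Sum>p\<in>(UNIV::('a::finite \<times> 'b::finite) set). f p) = (\<Sum>i\<in>UNIV. \<Sum>k\<in>UNIV. f (i, k))"
  using sum.cartesian_product[of "\<lambda>i k. f (i, k)" UNIV UNIV] by (simp add: case_prod_eta)

lemma omega_K_tprod:
  assumes "bilinear \<omega>" "bilinear K"
  shows "omega_K \<omega> K (tprod a s) (tprod b t) = \<omega> a b * K s t"
proof -
  let ?W = "\<lambda>i j. \<omega> (axis i 1) (axis j 1)" and ?K = "\<lambda>k l. K (axis k 1) (axis l 1)"
  have "omega_K \<omega> K (tprod a s) (tprod b t) =
      (\<Sum>i\<in>UNIV. \<Sum>k\<in>UNIV. \<Sum>j\<in>UNIV. \<Sum>l\<in>UNIV. (a$i * b$j * ?W i j) * (s$k * t$l * ?K k l))"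
    by (simp add: omega_K_def tprod_def sum_UNIV_prod mult_ac)
  also have "\<dots> = (\<Sum>i\<in>UNIV. \<Sum>j\<in>UNIV. \<Sum>k\<in>UNIV. \<Sum>l\<in>UNIV. (a$i * b$j * ?W i j) * (s$k * t$l * ?K k l))"
    by (rule sum.cong[OF refl], rule sum.swap)
  also have "\<dots> = (\<Sum>i\<in>UNIV. \<Sum>j\<in>UNIV. (a$i * b$j * ?W i j) * (\<Sum>k\<in>UNIV. \<Sum>l\<in>UNIV. s$k * t$l * ?K k l))"
    by (simp only: sum_distrib_left)
  also have "\<dots> = (\<Sum>i\<in>UNIV. \<Sum>j\<in>UNIV. a$i * b$j * ?W i j) * (\<Sum>k\<in>UNIV. \<Sum>l\<in>UNIV. s$k * t$l * ?K k l)"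
    by (simp only: sum_distrib_right)
  also have "\<dots> = \<omega> a b * K s t"
    using bilinear_axis_expansion[OF assms(1), of a b] bilinear_axis_expansion[OF assms(2), of s t] by simp
  finally show ?thesis .
qed

lemma bilinear_omega_K: "bilinear (omega_K \<omega> K)"
  unfolding bilinear_def omega_K_def
  by (auto intro!: linearI simp: algebra_simps sum.distrib sum_distrib_left)

definition tprod3 :: "(real^'m) \<times> (real^'m) \<times> (real^'m) \<Rightarrow> real^'n
    \<Rightarrow> (real^('m \<times> 'n)) \<times> (real^('m \<times> 'n)) \<times> (real^('m \<times> 'n))" where
  "tprod3 u t = (tprod (fst u) t, tprod (fst (snd u)) t, tprod (snd (snd u)) t)"

lemma bilinear_tprod3: "bilinear tprod3"
  unfolding bilinear_def tprod3_def
  by (auto intro!: linearI simp: bilinear_ladd[OF bilinear_tprod] bilinear_radd[OF bilinear_tprod]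
      bilinear_lmul[OF bilinear_tprod] bilinear_rmul[OF bilinear_tprod])

lemma maslov_polar_tprod3:
  assumes "bilinear \<omega>" "bilinear K" "\<forall>x y. K x y = K y x"
  shows "maslov_polar (omega_K \<omega> K) (tprod3 u s) (tprod3 v t) = maslov_polar \<omega> u v * K s t"
  using assms(3)
  by (simp add: maslov_polar_def tprod3_def omega_K_tprod[OF assms(1,2)] algebra_simps add_divide_distrib)

lemma tprod_sum_eq_0_imp:
  fixes g :: "'x \<Rightarrow> real^'m" and E :: "(real^'n) set"
  assumes "finite A" "independent E"
    and sum0: "(\<Sum>(a, e)\<in>A \<times> E. c (a, e) *\<^sub>R tprod (g a) e) = 0"
    and "e \<in> E"
  shows "(\<Sum>a\<in>A. c (a, e) *\<^sub>R g a) = 0"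
proof -
  have "finite E" using assms(2) finiteI_independent by blast
  have indep: "u v = 0" if "(\<Sum>v\<in>E. u v *\<^sub>R v) = 0" "v \<in> E" for u v
    using assms(2) that unfolding dependent_finite[OF \<open>finite E\<close>] by blast
  have components: "(\<Sum>e\<in>E. (\<Sum>a\<in>A. c (a, e) * g a $ p) *\<^sub>R e) = 0" for p
  proof -
    have "(\<Sum>e\<in>E. (\<Sum>a\<in>A. c (a, e) * g a $ p) *\<^sub>R e) $ r
        = (\<Sum>(a, e)\<in>A \<times> E. c (a, e) *\<^sub>R tprod (g a) e) $ (p, r)" for r
    proof -
      have "(\<Sum>e\<in>E. (\<Sum>a\<in>A. c (a, e) * g a $ p) *\<^sub>R e) $ r = (\<Sum>e\<in>E. \<Sum>a\<in>A. c (a, e) * g a $ p * e $ r)"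
        by (simp add: sum_component sum_distrib_right)
      also have "\<dots> = (\<Sum>a\<in>A. \<Sum>e\<in>E. c (a, e) * g a $ p * e $ r)"
        by (rule sum.swap)
      also have "\<dots> = (\<Sum>(a, e)\<in>A \<times> E. c (a, e) *\<^sub>R tprod (g a) e) $ (p, r)"
        by (simp add: sum_component sum.cartesian_product tprod_def case_prod_beta mult_ac)
      finally show ?thesis .
    qed
    then show ?thesis using sum0 by (simp add: vec_eq_iff)
  qed
  have "(\<Sum>a\<in>A. c (a, e) * g a $ p) = 0" for p
    using indep[OF components assms(4)] .
  then show ?thesis by (simp add: vec_eq_iff sum_component)
qed

lemma linear_image_tensor_t_subset:
  assumes "linear g" "subspace W" "\<And>a t. a \<in> L \<Longrightarrow> g (tprod a t) \<in> W"
  shows "g ` tensor_t L \<subseteq> W"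
  unfolding tensor_t_def span_linear_image[OF assms(1), symmetric]
  by (rule span_minimal) (use assms(2,3) in auto)

lemma tensor_t_Times_subset_span:
  fixes E :: "(real^'n) set"
  assumes "subspace L1" "subspace L2" "subspace L3" "L1 \<times> L2 \<times> L3 \<subseteq> span B" "UNIV \<subseteq> span E"
  shows "(tensor_t L1 :: (real^('m::finite \<times> 'n)) set) \<times> tensor_t L2 \<times> tensor_t L3
      \<subseteq> span (case_prod tprod3 ` (B \<times> E))"
proof -
  let ?W = "span (case_prod tprod3 ` (B \<times> E))"
  have tprod3_in: "tprod3 u t \<in> ?W" if "u \<in> L1 \<times> L2 \<times> L3" for u and t :: "real^'n"
    using bilinear_in_span_image[OF bilinear_tprod3, of u B t E] assms(4,5) that by blast
  have tprod_0 [simp]: "tprod 0 t = 0" for t :: "real^'n"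
    by (rule bilinear_lzero[OF bilinear_tprod])
  have "(\<lambda>y. (y, 0, 0)) ` tensor_t L1 \<subseteq> ?W"
    using tprod3_in[of "(_, 0, 0)"] assms(2,3)
    by (intro linear_image_tensor_t_subset) (auto intro: linearI simp: tprod3_def subspace_0)
  moreover have "(\<lambda>y. (0, y, 0)) ` tensor_t L2 \<subseteq> ?W"
    using tprod3_in[of "(0, _, 0)"] assms(1,3)
    by (intro linear_image_tensor_t_subset) (auto intro: linearI simp: tprod3_def subspace_0)
  moreover have "(\<lambda>y. (0, 0, y)) ` tensor_t L3 \<subseteq> ?W"
    using tprod3_in[of "(0, 0, _)"] assms(1,2)
    by (intro linear_image_tensor_t_subset) (auto intro: linearI simp: tprod3_def subspace_0)
  ultimately have "(X1, 0, 0) + (0, X2, 0) + (0, 0, X3) \<in> ?W"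
    if "X1 \<in> tensor_t L1" "X2 \<in> tensor_t L2" "X3 \<in> tensor_t L3" for X1 X2 X3
    using that by (blast intro: span_add)
  then show ?thesis by fastforce
qed

lemma tprod3_coefficients_vanish:
  fixes E :: "(real^'n) set"
  assumes "finite B" and indep_B: "\<forall>c. (\<Sum>u\<in>B. c u *\<^sub>R u) = 0 \<longrightarrow> (\<forall>u\<in>B. c u = 0)"
    and "independent E"
    and sum0: "(\<Sum>p\<in>B \<times> E. c p *\<^sub>R case_prod tprod3 p) = 0" and "p \<in> B \<times> E"
  shows "c p = 0"
proof -
  obtain u e where p: "p = (u, e)" "e \<in> E" using assms(5) by auto
  have c1: "(\<Sum>(u, e)\<in>B \<times> E. c (u, e) *\<^sub>R tprod (fst u) e) = 0"
    using arg_cong[OF sum0, of fst] by (simp add: fst_sum tprod3_def case_prod_beta)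
  have c2: "(\<Sum>(u, e)\<in>B \<times> E. c (u, e) *\<^sub>R tprod (fst (snd u)) e) = 0"
    using arg_cong[OF sum0, of "\<lambda>x. fst (snd x)"] by (simp add: fst_sum snd_sum tprod3_def case_prod_beta)
  have c3: "(\<Sum>(u, e)\<in>B \<times> E. c (u, e) *\<^sub>R tprod (snd (snd u)) e) = 0"
    using arg_cong[OF sum0, of "\<lambda>x. snd (snd x)"] by (simp add: snd_sum tprod3_def case_prod_beta)
  have "(\<Sum>u\<in>B. c (u, e) *\<^sub>R u) = 0"
    using tprod_sum_eq_0_imp[OF assms(1,3) c1 p(2)] tprod_sum_eq_0_imp[OF assms(1,3) c2 p(2)]
      tprod_sum_eq_0_imp[OF assms(1,3) c3 p(2)]
    by (simp add: prod_eq_iff fst_sum snd_sum)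
  then show ?thesis using indep_B p assms(5) by auto
qed

lemma orthogonal_basis_of_tprod3:
  fixes \<omega> :: "real^'m \<Rightarrow> real^'m \<Rightarrow> real" and K :: "real^'n \<Rightarrow> real^'n \<Rightarrow> real"
  assumes "bilinear \<omega>" "bilinear K" "\<forall>x y. K x y = K y x"
    and L: "subspace L1" "subspace L2" "subspace L3"
    and B: "orthogonal_basis_of (maslov_polar \<omega>) (L1 \<times> L2 \<times> L3) B id"
    and E: "orthogonal_basis_of K UNIV E id"
  shows "orthogonal_basis_of (maslov_polar (omega_K \<omega> K))
    ((tensor_t L1 :: (real^('m::finite \<times> 'n)) set) \<times> tensor_t L2 \<times> tensor_t L3) (B \<times> E) (case_prod tprod3)"
proof -
  have fin_B: "finite B" and B_sub: "B \<subseteq> L1 \<times> L2 \<times> L3" and span_B: "L1 \<times> L2 \<times> L3 \<subseteq> span B"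
    and indep_B: "\<forall>c. (\<Sum>u\<in>B. c u *\<^sub>R u) = 0 \<longrightarrow> (\<forall>u\<in>B. c u = 0)"
    using B by (auto simp: orthogonal_basis_of_def)
  have "finite E" and span_E: "UNIV \<subseteq> span E" and indep_E: "independent E"
    using E orthogonal_basis_of_independent[OF E, of E] by (auto simp: orthogonal_basis_of_def)
  have "finite (B \<times> E)" using fin_B \<open>finite E\<close> by simp
  moreover have "case_prod tprod3 ` (B \<times> E) \<subseteq> tensor_t L1 \<times> tensor_t L2 \<times> tensor_t L3"
    using B_sub by (force simp: tprod3_def tensor_t_def intro: span_base)
  moreover note tensor_t_Times_subset_span[OF L span_B span_E]
  moreover have "\<forall>c. (\<Sum>p\<in>B \<times> E. c p *\<^sub>R case_prod tprod3 p) = 0 \<longrightarrow> (\<forall>p\<in>B \<times> E. c p = 0)"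
    using tprod3_coefficients_vanish[OF fin_B indep_B indep_E] by blast
  moreover have "\<forall>p\<in>B \<times> E. \<forall>q\<in>B \<times> E. p \<noteq> q \<longrightarrow>
      maslov_polar (omega_K \<omega> K) (case_prod tprod3 p) (case_prod tprod3 q) = 0"
  proof (intro ballI impI)
    fix p q assume "p \<in> B \<times> E" "q \<in> B \<times> E" "p \<noteq> q"
    then have "fst p \<in> B" "snd p \<in> E" "fst q \<in> B" "snd q \<in> E" "fst p \<noteq> fst q \<or> snd p \<noteq> snd q"
      by (auto simp: mem_Times_iff prod_eq_iff)
    then have "maslov_polar \<omega> (fst p) (fst q) * K (snd p) (snd q) = 0"
      using orthogonal_basis_of_orthogonal[OF B, of "fst p" "fst q"]
        orthogonal_basis_of_orthogonal[OF E, of "snd p" "snd q"] by auto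
    then show "maslov_polar (omega_K \<omega> K) (case_prod tprod3 p) (case_prod tprod3 q) = 0"
      by (simp add: case_prod_beta maslov_polar_tprod3[OF assms(1-3)])
  qed
  ultimately show ?thesis unfolding orthogonal_basis_of_def by blast
qed

theorem lemma2p19:
  fixes V :: "(real^'m) set" and \<omega> :: "real^'m \<Rightarrow> real^'m \<Rightarrow> real"
    and K :: "real^'n \<Rightarrow> real^'n \<Rightarrow> real"
    and L1 L2 L3 :: "(real^'m) set"
  assumes "symplectic_on V \<omega>"
    and "even_integral_form K"
    and "lagrangian V \<omega> L1" and "lagrangian V \<omega> L2" and "lagrangian V \<omega> L3"
  shows "maslov_kashiwara (omega_K \<omega> K) (tensor_t L1 :: (real^('m \<times> 'n)) set) (tensor_t L2) (tensor_t L3)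
           = signature (\<lambda>t. K t t) UNIV * maslov_kashiwara \<omega> L1 L2 L3"
proof -
  have \<omega>: "bilinear \<omega>" using assms(1) by (simp add: symplectic_on_def)
  have K: "bilinear K" "\<forall>x y. K x y = K y x" using assms(2) by (auto simp: even_integral_form_def)
  have L: "subspace L1" "subspace L2" "subspace L3" using assms(3-5) by (auto simp: lagrangian_def)
  obtain B where B: "orthogonal_basis_of (maslov_polar \<omega>) (L1 \<times> L2 \<times> L3) B id"
    using orthogonal_basis_exists[OF _ bilinear_maslov_polar[OF \<omega>]] L maslov_polar_sym
    by (metis subspace_Times)
  obtain E where E: "orthogonal_basis_of K UNIV E id"
    using orthogonal_basis_exists[OF subspace_UNIV K] .
  have fin: "finite B" "finite E" using B E by (simp_all add: orthogonal_basis_of_def)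
  have "maslov_kashiwara (omega_K \<omega> K) (tensor_t L1 :: (real^('m \<times> 'n)) set) (tensor_t L2) (tensor_t L3)
      = diag_signature (\<lambda>p. maslov_polar \<omega> (fst p) (fst p) * K (snd p) (snd p)) (B \<times> E)"
    unfolding maslov_kashiwara_eq_signature_polar
    using signature_orthogonal_basis[OF orthogonal_basis_of_tprod3[OF \<omega> K L B E]
        bilinear_maslov_polar[OF bilinear_omega_K]] L
    by (simp add: subspace_Times tensor_t_def case_prod_beta maslov_polar_tprod3[OF \<omega> K])
  also have "\<dots> = diag_signature (\<lambda>u. maslov_polar \<omega> u u) B * diag_signature (\<lambda>e. K e e) E"
    by (rule diag_signature_times[OF fin])
  also have "\<dots> = maslov_kashiwara \<omega> L1 L2 L3 * signature (\<lambda>t. K t t) UNIV"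
    using signature_orthogonal_basis[OF B bilinear_maslov_polar[OF \<omega>]]
      signature_orthogonal_basis[OF E K(1) subspace_UNIV] L
    by (simp add: maslov_kashiwara_eq_signature_polar subspace_Times)
  finally show ?thesis by (simp add: mult.commute)
qed

end
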